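(* For each $\alpha>0$ let $X_\alpha=(x_1,x_2,x_3)$ be as in the context, and set $y_1=x_1$, $y_2=x_2$, $y_3=x_3+\frac{x_1x_2}{2}$, viewed as functions of $(u,v)$. Let $(\hat u,\hat v)\in\mathbb{R}^2$, and for $\alpha>0$ let $u_\alpha=\frac{\hat u}{\alpha}$ and $v_\alpha=\frac{4\ln\alpha+\hat v}{2\alpha}$. Then, as $\alpha\to+\infty$, $$y_1(u_\alpha,v_\alpha)\to\frac{\sin\hat u}{4}e^{\hat v/2},\qquad y_2(u_\alpha,v_\alpha)\to0,\qquad y_3(u_\alpha,v_\alpha)\to-\frac{\cos\hat u}{4}e^{\hat v/2}.$$
   Context: $\mathrm{Nil}_3$ is $\mathbb{R}^3$ with the metric $dx_1^2+dx_2^2+\big(dx_3+\tfrac12(x_2dx_1-x_1dx_2)\big)^2$. For $\alpha>0$ and $\theta\in\mathbb{R}$ set $C_{\alpha,\theta}=\frac{\sin(2\theta)}{2\alpha}$ and $P_{\alpha,\theta}(x)=\alpha^2+\cos(2\theta)x^2-C_{\alpha,\theta}^2x^4$. Let $\theta^+_\alpha=\pi/2$ if $\alpha>1$, and $\theta^+_\alpha=\frac12\arccos(1-2\alpha^2)$ if $\alpha\le1$. Let $$L(\alpha,\theta)=\int_{-1}^1\frac{2\alpha C_{\alpha,\theta}^2x^2-\alpha\cos(2\theta)+C_{\alpha,\theta}^2x^2\sqrt{P_{\alpha,\theta}(x)}}{\sqrt{(1-x^2)P_{\alpha,\theta}(x)}(\alpha+\sqrt{P_{\alpha,\theta}(x)})}dx.$$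 Let $\theta=\tilde\theta_\alpha$ be the unique $\theta\in(0,\theta^+_\alpha)\cap(0,\pi/4)$ with $L(\alpha,\theta)=0$, and $C=C_{\alpha,\theta}$. Let $\varphi$ solve $\varphi'^2=P_{\alpha,\theta}(\cos\varphi)$ with $\varphi(0)=0$ and $\varphi'(0)\le0$. Define $\beta'=C\cos^2\varphi$ with $\beta(0)=0$, and $G'=\frac{C^2\cos^2\varphi-\cos 2\theta}{\alpha-\varphi'}$ with $G(0)=0$. Put $A=\alpha v+\beta(u)$ and $X_\alpha(u,v)=(x_1,x_2,x_3)$ with $x_1=\frac{G'}{\alpha}\cos\varphi\sinh A-\frac C\alpha\sin\varphi\cosh A$, $x_2=Cv-G$, $x_3=-\frac{x_1x_2}2+\frac C\alpha(\frac{G'}{\alpha}-1)\cos\varphi\cosh A-\frac1\alpha(\frac{C^2}\alpha+G')\sin\varphi\sinh A$, where $\varphi,G,G'$ are evaluated at $u$. All these quantities depend on $\alpha$. *)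

theory Defs
  imports "HOL-Analysis.Analysis"
begin

definition Ccoef :: "real \<Rightarrow> real \<Rightarrow> real" where
  "Ccoef \<alpha> \<theta> = sin (2 * \<theta>) / (2 * \<alpha>)"

definition Ppoly :: "real \<Rightarrow> real \<Rightarrow> real \<Rightarrow> real" where
  "Ppoly \<alpha> \<theta> x = \<alpha>^2 + cos (2 * \<theta>) * x^2 - (Ccoef \<alpha> \<theta>)^2 * x^4"

definition theta_plus :: "real \<Rightarrow> real" where
  "theta_plus \<alpha> = (if \<alpha> > 1 then pi / 2 else arccos (1 - 2 * \<alpha>^2) / 2)"

text \<open>The integral L(alpha,theta) over [-1,1] (Henstock-Kurzweil integral; the
  integrand is absolutely integrable, with integrable singularities at the endpoints).\<close>
definition Lint :: "real \<Rightarrow> real \<Rightarrow> real" where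
  "Lint \<alpha> \<theta> = integral {-1..1} (\<lambda>x.
      (2 * \<alpha> * (Ccoef \<alpha> \<theta>)^2 * x^2 - \<alpha> * cos (2 * \<theta>)
        + (Ccoef \<alpha> \<theta>)^2 * x^2 * sqrt (Ppoly \<alpha> \<theta> x))
      / (sqrt ((1 - x^2) * Ppoly \<alpha> \<theta> x) * (\<alpha> + sqrt (Ppoly \<alpha> \<theta> x))))"

definition Gder :: "real \<Rightarrow> real \<Rightarrow> real \<Rightarrow> real \<Rightarrow> real" where
  "Gder \<alpha> \<theta> ph dph = ((Ccoef \<alpha> \<theta>)^2 * (cos ph)^2 - cos (2 * \<theta>)) / (\<alpha> - dph)"

definition Xmap :: "real \<Rightarrow> real \<Rightarrow> (real \<Rightarrow> real) \<Rightarrow> (real \<Rightarrow> real) \<Rightarrow> (real \<Rightarrow> real)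
    \<Rightarrow> (real \<Rightarrow> real) \<Rightarrow> real \<Rightarrow> real \<Rightarrow> real \<times> real \<times> real" where
  "Xmap \<alpha> \<theta> ph dph be G u v =
    (let C = Ccoef \<alpha> \<theta>; A = \<alpha> * v + be u; g' = Gder \<alpha> \<theta> (ph u) (dph u);
         x1 = g' / \<alpha> * cos (ph u) * sinh A - C / \<alpha> * sin (ph u) * cosh A;
         x2 = C * v - G u;
         x3 = - x1 * x2 / 2 + C / \<alpha> * (g' / \<alpha> - 1) * cos (ph u) * cosh A
              - 1 / \<alpha> * (C^2 / \<alpha> + g') * sin (ph u) * sinh A
     in (x1, x2, x3))"

end

theory Submission
  imports Defs "HOL-Real_Asymp.Real_Asymp"
begin

text \<open>For \<open>\<alpha> > 1\<close> the integrand of \<open>L(\<alpha>,\<theta>)\<close> is uniformly negative unless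
  \<open>cos 2\<theta> \<le> 1/\<alpha>\<^sup>2\<close>; hence at the root \<open>\<theta>\<close> we have \<open>\<alpha>C \<rightarrow> 1/2\<close>, and \<open>P\<close> stays
  within \<open>1\<close> of \<open>\<alpha>\<^sup>2\<close> on \<open>[-1,1]\<close>. As \<open>P > 0\<close>, \<open>\<phi>'\<close> never vanishes, so by Darboux's
  theorem it keeps the sign of \<open>\<phi>'(0) \<le> 0\<close>: \<open>\<phi>' = -\<surd>P\<close> lies within \<open>1/\<alpha>\<close> of \<open>-\<alpha>\<close>,
  while \<open>|\<beta>'| \<le> 1/\<alpha>\<close> and \<open>|G'| \<le> 1/\<alpha>\<^sup>3\<close>. At \<open>u = uh/\<alpha>\<close> this gives \<open>\<phi> \<rightarrow> -uh\<close>,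
  \<open>\<beta>, G, \<alpha>G' \<rightarrow> 0\<close>, while \<open>\<alpha>v + \<beta> = 2 ln \<alpha> + vh/2 + o(1)\<close>, so that \<open>sinh\<close> and
  \<open>cosh\<close> of it are \<open>\<alpha>\<^sup>2 exp(vh/2)/2 + o(\<alpha>\<^sup>2)\<close>.\<close>

lemma has_real_derivative_zero_between:
  fixes f f' :: "real \<Rightarrow> real"
  assumes der: "\<And>t. (f has_real_derivative f' t) (at t)"
    and "a < b" and "f' a < 0" and "0 < f' b"
  obtains m where "a < m" "m < b" "f' m = 0"
proof -
  have "continuous_on {a..b} f"
    using der by (meson DERIV_continuous continuous_at_imp_continuous_on)
  then obtain m where m: "m \<in> {a..b}" and min: "\<And>y. y \<in> {a..b} \<Longrightarrow> f m \<le> f y"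
    using continuous_attains_inf[of "{a..b}" f] \<open>a < b\<close> by force
  obtain d1 where "d1 > 0" and d1: "\<And>h. h > 0 \<Longrightarrow> h < d1 \<Longrightarrow> f (a + h) < f a"
    using DERIV_neg_dec_right[OF der \<open>f' a < 0\<close>] by blast
  obtain d2 where "d2 > 0" and d2: "\<And>h. h > 0 \<Longrightarrow> h < d2 \<Longrightarrow> f (b - h) < f b"
    using DERIV_pos_inc_left[OF der \<open>0 < f' b\<close>] by blast
  define h where "h = min (min d1 d2) (b - a) / 2"
  have h: "0 < h" "h < d1" "h < d2" "h \<le> b - a"
    using \<open>d1 > 0\<close> \<open>d2 > 0\<close> \<open>a < b\<close> by (auto simp: h_def)
  have "m \<noteq> a" using d1[OF h(1,2)] min[of "a + h"] h by auto
  moreover have "m \<noteq> b" using d2[OF h(1,3)] min[of "b - h"] h by auto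
  ultimately have "a < m" "m < b" using m by auto
  moreover have "f' m = 0"
    by (rule DERIV_local_min[OF der, of "min (m - a) (b - m)"])
       (use \<open>a < m\<close> \<open>m < b\<close> min in \<open>auto simp: abs_if\<close>)
  ultimately show ?thesis by (rule that)
qed

lemma has_real_derivative_nonzero_same_sign:
  fixes f f' :: "real \<Rightarrow> real"
  assumes der: "\<And>t. (f has_real_derivative f' t) (at t)" and nz: "\<And>t. f' t \<noteq> 0"
  shows "0 < f' a * f' b"
proof -
  have opposite: False if "a < b" "f' a * f' b < 0" for a b
  proof (cases "f' a < 0")
    case True
    then have "0 < f' b" using that by (simp add: mult_less_0_iff)
    then obtain m where "f' m = 0"
      using has_real_derivative_zero_between[OF der \<open>a < b\<close> True] by metis
    with nz show False by blast
  next
    case False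
    then have "- f' a < 0" "0 < - f' b" using that nz[of a] by (auto simp: mult_less_0_iff)
    then obtain m where "- f' m = 0"
      using has_real_derivative_zero_between[OF DERIV_minus[OF der] \<open>a < b\<close>] by metis
    with nz show False by simp
  qed
  have "f' a * f' b \<noteq> 0" using nz by simp
  moreover have "\<not> f' a * f' b < 0"
    using opposite[of a b] opposite[of b a] by (cases a b rule: linorder_cases) (auto simp: mult.commute)
  ultimately show ?thesis by linarith
qed

lemma tendsto_at_top_of_dist_bound:
  fixes f g :: "real \<Rightarrow> real"
  assumes "\<And>x. x > 1 \<Longrightarrow> \<bar>f x - l\<bar> \<le> g x" and "(g \<longlongrightarrow> 0) at_top"
  shows "(f \<longlongrightarrow> l) at_top"
proof (rule LIM_zero_cancel, rule Lim_null_comparison)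
  show "\<forall>\<^sub>F x in at_top. norm (f x - l) \<le> g x"
    using eventually_gt_at_top[of 1] by eventually_elim (use assms(1) in simp)
qed fact

lemma sinh_cosh_log_square_tendsto:
  fixes b :: "real \<Rightarrow> real"
  assumes "(b \<longlongrightarrow> w) at_top"
  shows "((\<lambda>x. sinh (2 * ln x + b x) / x^2) \<longlongrightarrow> exp w / 2) at_top"
    and "((\<lambda>x. cosh (2 * ln x + b x) / x^2) \<longlongrightarrow> exp w / 2) at_top"
proof -
  have exp_A: "exp (2 * ln x + b x) = x^2 * exp (b x)" "exp (- (2 * ln x + b x)) = exp (- b x) / x^2"
    if "x > 0" for x
  proof -
    have "2 * ln x = ln (x^2)" using that by (simp add: ln_realpow)
    then show "exp (2 * ln x + b x) = x^2 * exp (b x)" "exp (- (2 * ln x + b x)) = exp (- b x) / x^2"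
      using that by (simp_all add: exp_add exp_diff exp_minus field_simps)
  qed
  have "((\<lambda>x. 1 / x^4) \<longlongrightarrow> (0::real)) at_top" by real_asymp
  then have "((\<lambda>x. (exp (b x) - exp (- b x) * (1 / x^4)) / 2) \<longlongrightarrow> (exp w - exp (- w) * 0) / 2) at_top"
    and "((\<lambda>x. (exp (b x) + exp (- b x) * (1 / x^4)) / 2) \<longlongrightarrow> (exp w + exp (- w) * 0) / 2) at_top"
    by (intro tendsto_intros assms; simp)+
  moreover have "\<forall>\<^sub>F x in at_top. (exp (b x) - exp (- b x) * (1 / x^4)) / 2 = sinh (2 * ln x + b x) / x^2"
    and "\<forall>\<^sub>F x in at_top. (exp (b x) + exp (- b x) * (1 / x^4)) / 2 = cosh (2 * ln x + b x) / x^2"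
    using eventually_gt_at_top[of 0]
    by (eventually_elim, simp only: sinh_field_def cosh_field_def exp_A,
        simp add: field_simps eval_nat_numeral)+
  ultimately show "((\<lambda>x. sinh (2 * ln x + b x) / x^2) \<longlongrightarrow> exp w / 2) at_top"
    and "((\<lambda>x. cosh (2 * ln x + b x) / x^2) \<longlongrightarrow> exp w / 2) at_top"
    by (auto elim: Lim_transform_eventually)
qed

section \<open>The integral \<open>L\<close> for large \<open>\<alpha>\<close>\<close>

lemma Ccoef_bounds:
  assumes "\<alpha> > 0" "0 < t" "t < pi/4"
  shows "0 < Ccoef \<alpha> t" "Ccoef \<alpha> t \<le> 1 / (2*\<alpha>)"
proof -
  have "0 < sin (2*t)" using assms by (intro sin_gt_zero) auto
  then show "0 < Ccoef \<alpha> t" using assms by (simp add: Ccoef_def)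
  show "Ccoef \<alpha> t \<le> 1 / (2*\<alpha>)"
    using assms by (simp add: Ccoef_def divide_right_mono)
qed

lemma Ppoly_close:
  assumes "\<alpha> > 1" "0 < t" "t < pi/4" "\<bar>y\<bar> \<le> 1"
  shows "\<bar>Ppoly \<alpha> t y - \<alpha>^2\<bar> \<le> 1"
proof -
  define C where "C = Ccoef \<alpha> t"
  have y2: "0 \<le> y^2" "y^2 \<le> 1" using assms(4) by (auto simp: abs_square_le_1)
  have "y^4 \<le> 1" using y2 power_le_one[of "y^2" 2] by (simp flip: power_mult)
  have "1 / (2*\<alpha>) \<le> 1" using assms(1) by simp
  then have "C \<le> 1" using Ccoef_bounds(2)[of \<alpha> t] assms unfolding C_def by linarith
  then have "C^2 * y^4 \<le> 1" using Ccoef_bounds[of \<alpha> t] assms \<open>y^4 \<le> 1\<close>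
    by (simp add: C_def mult_le_one power_le_one)
  moreover have "0 \<le> C^2 * y^4" by (simp add: zero_le_even_power)
  moreover have "0 \<le> cos (2*t) * y^2" "cos (2*t) * y^2 \<le> 1"
    using y2 assms cos_gt_zero[of "2*t"] by (auto simp: mult_le_one)
  ultimately show ?thesis unfolding Ppoly_def C_def[symmetric] abs_le_iff by linarith
qed

lemma sqrt_Ppoly_close:
  assumes "\<alpha> > 1" "0 < t" "t < pi/4" "\<bar>y\<bar> \<le> 1"
  shows "0 < Ppoly \<alpha> t y" "\<bar>sqrt (Ppoly \<alpha> t y) - \<alpha>\<bar> \<le> 1 / \<alpha>"
proof -
  define P where "P = Ppoly \<alpha> t y"
  have close: "\<bar>P - \<alpha>^2\<bar> \<le> 1" using Ppoly_close[OF assms] by (simp add: P_def)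
  moreover have "1 < \<alpha>^2" using assms(1) by (simp add: one_less_power)
  ultimately show "0 < Ppoly \<alpha> t y" by (simp add: P_def abs_le_iff)
  then have "(sqrt P - \<alpha>) * (sqrt P + \<alpha>) = P - \<alpha>^2"
    by (simp add: P_def algebra_simps power2_eq_square)
  then have "\<bar>sqrt P - \<alpha>\<bar> * (sqrt P + \<alpha>) \<le> 1"
    using close assms(1) by (simp add: abs_mult)
  moreover have "\<bar>sqrt P - \<alpha>\<bar> * \<alpha> \<le> \<bar>sqrt P - \<alpha>\<bar> * (sqrt P + \<alpha>)"
    using \<open>0 < Ppoly \<alpha> t y\<close> by (intro mult_left_mono) (auto simp: P_def)
  ultimately have "\<bar>sqrt P - \<alpha>\<bar> * \<alpha> \<le> 1" by linarith
  then show "\<bar>sqrt (Ppoly \<alpha> t y) - \<alpha>\<bar> \<le> 1 / \<alpha>"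
    using assms(1) by (simp add: P_def field_simps)
qed

lemma sqrt_Ppoly_bounds:
  assumes "\<alpha> > 1" "0 < t" "t < pi/4" "\<bar>y\<bar> \<le> 1"
  shows "0 \<le> \<alpha> - 1 / \<alpha>" "\<alpha> - 1 / \<alpha> \<le> sqrt (Ppoly \<alpha> t y)" "sqrt (Ppoly \<alpha> t y) \<le> \<alpha> + 1"
proof -
  have "1 / \<alpha> < 1" using assms(1) by simp
  then show "0 \<le> \<alpha> - 1 / \<alpha>" "\<alpha> - 1 / \<alpha> \<le> sqrt (Ppoly \<alpha> t y)" "sqrt (Ppoly \<alpha> t y) \<le> \<alpha> + 1"
    using sqrt_Ppoly_close(2)[OF assms] assms(1) unfolding abs_le_iff by linarith+
qed

definition Lint_integrand :: "real \<Rightarrow> real \<Rightarrow> real \<Rightarrow> real" where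
  "Lint_integrand \<alpha> \<theta> x =
     (2 * \<alpha> * (Ccoef \<alpha> \<theta>)^2 * x^2 - \<alpha> * cos (2 * \<theta>)
       + (Ccoef \<alpha> \<theta>)^2 * x^2 * sqrt (Ppoly \<alpha> \<theta> x))
     / (sqrt (1 - x^2) * sqrt (Ppoly \<alpha> \<theta> x) * (\<alpha> + sqrt (Ppoly \<alpha> \<theta> x)))"

lemma Lint_eq_integral: "Lint \<alpha> \<theta> = integral {-1..1} (Lint_integrand \<alpha> \<theta>)"
  unfolding Lint_def Lint_integrand_def by (simp add: real_sqrt_mult)

lemma Lint_denominator_bounds:
  assumes "\<alpha> > 1" "0 < t" "t < pi/4" "\<bar>x\<bar> < 1"
  defines "S \<equiv> sqrt (Ppoly \<alpha> t x)"
  shows "sqrt (1 - x^2) * (\<alpha>^2 - 1) \<le> sqrt (1 - x^2) * S * (\<alpha> + S)"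
    and "sqrt (1 - x^2) * S * (\<alpha> + S) \<le> (\<alpha> + 1) * (2*\<alpha> + 1)"
proof -
  have q: "0 < sqrt (1 - x^2)" "sqrt (1 - x^2) \<le> 1" using assms(4) by (auto simp: abs_square_less_1)
  have S: "\<alpha> - 1 / \<alpha> \<le> S" "S \<le> \<alpha> + 1" "0 \<le> \<alpha> - 1 / \<alpha>"
    using sqrt_Ppoly_bounds[of \<alpha> t x] assms by simp_all
  then have "(\<alpha> - 1 / \<alpha>) * \<alpha> \<le> S * (\<alpha> + S)" using assms(1) by (intro mult_mono) auto
  moreover have "(\<alpha> - 1 / \<alpha>) * \<alpha> = \<alpha>^2 - 1" using assms(1) by (simp add: field_simps power2_eq_square)
  ultimately show "sqrt (1 - x^2) * (\<alpha>^2 - 1) \<le> sqrt (1 - x^2) * S * (\<alpha> + S)"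
    using q by (simp add: mult.assoc)
  have "0 \<le> S" using S by linarith
  have "sqrt (1 - x^2) * (S * (\<alpha> + S)) \<le> S * (\<alpha> + S)"
    by (rule mult_left_le_one_le) (use q \<open>0 \<le> S\<close> assms(1) in auto)
  moreover have "S * (\<alpha> + S) \<le> (\<alpha> + 1) * (2*\<alpha> + 1)"
    using S \<open>0 \<le> S\<close> assms(1) by (intro mult_mono) auto
  ultimately show "sqrt (1 - x^2) * S * (\<alpha> + S) \<le> (\<alpha> + 1) * (2*\<alpha> + 1)"
    unfolding mult.assoc by linarith
qed

lemma Lint_integrand_le:
  assumes "\<alpha> > 1" "0 < t" "t < pi/4" "\<bar>x\<bar> < 1"
    and dominant: "(3*\<alpha> + 1) / (4*\<alpha>^2) \<le> \<alpha> * cos (2*t)"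
  shows "Lint_integrand \<alpha> t x \<le> ((3*\<alpha> + 1) / (4*\<alpha>^2) - \<alpha> * cos (2*t)) / ((\<alpha> + 1) * (2*\<alpha> + 1))"
proof -
  define C S where "C = Ccoef \<alpha> t" and "S = sqrt (Ppoly \<alpha> t x)"
  define D where "D = sqrt (1 - x^2) * S * (\<alpha> + S)"
  define \<delta> where "\<delta> = \<alpha> * cos (2*t) - (3*\<alpha> + 1) / (4*\<alpha>^2)"
  have x: "0 \<le> x^2" "x^2 \<le> 1" using assms(4) by (auto simp: abs_square_le_1)
  have S: "0 \<le> S" "S \<le> \<alpha> + 1"
    using sqrt_Ppoly_bounds[of \<alpha> t x] assms(1-4) unfolding S_def by linarith+
  have C: "0 \<le> C" "C^2 \<le> 1 / (4*\<alpha>^2)"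
    using Ccoef_bounds[of \<alpha> t] assms(1-3) power_mono[of C "1/(2*\<alpha>)" 2]
    by (auto simp: C_def power_divide power_mult_distrib)
  have "2*\<alpha>*C^2*x^2 \<le> 2*\<alpha>*C^2" "C^2*x^2*S \<le> C^2*(\<alpha> + 1)"
    using x S assms(1) by (auto intro!: mult_left_le mult_mono)
  moreover have "(3*\<alpha> + 1) * C^2 \<le> (3*\<alpha> + 1) * (1 / (4*\<alpha>^2))"
    using C assms(1) by (intro mult_left_mono) auto
  ultimately have numerator: "2*\<alpha>*C^2*x^2 - \<alpha> * cos (2*t) + C^2*x^2*S \<le> - \<delta>"
    by (simp add: \<delta>_def algebra_simps)
  have "0 < sqrt (1 - x^2) * (\<alpha>^2 - 1)"
    using assms(1,4) by (simp add: abs_square_less_1 one_less_power)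
  then have D: "0 < D" "D \<le> (\<alpha> + 1) * (2*\<alpha> + 1)"
    using Lint_denominator_bounds[OF assms(1-4)] unfolding D_def S_def by linarith+
  have "Lint_integrand \<alpha> t x \<le> - \<delta> / D"
    unfolding Lint_integrand_def C_def[symmetric] S_def[symmetric] D_def[symmetric]
    using numerator D by (intro divide_right_mono) auto
  also have "\<dots> \<le> - \<delta> / ((\<alpha> + 1) * (2*\<alpha> + 1))"
  proof -
    have "\<delta> / ((\<alpha> + 1) * (2*\<alpha> + 1)) \<le> \<delta> / D"
      using dominant D by (intro divide_left_mono) (auto simp: \<delta>_def)
    then show ?thesis by simp
  qed
  finally show ?thesis by (simp add: \<delta>_def)
qed

lemma Lint_integrand_abs_le:
  assumes "\<alpha> > 1" "0 < t" "t < pi/4" "\<bar>x\<bar> < 1"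
  shows "\<bar>Lint_integrand \<alpha> t x\<bar> \<le> (3*\<alpha> + 1) / (\<alpha>^2 - 1) * inverse (sqrt (1 - x^2))"
proof -
  define C S where "C = Ccoef \<alpha> t" and "S = sqrt (Ppoly \<alpha> t x)"
  define N where "N = 2*\<alpha>*C^2*x^2 - \<alpha> * cos (2*t) + C^2*x^2*S"
  define q where "q = sqrt (1 - x^2)"
  have x: "0 \<le> x^2" "x^2 \<le> 1" using assms(4) by (auto simp: abs_square_le_1)
  have S: "0 \<le> S" "S \<le> \<alpha> + 1"
    using sqrt_Ppoly_bounds[of \<alpha> t x] assms(1-4) unfolding S_def by linarith+
  have "1 / (2*\<alpha>) \<le> 1" using assms(1) by simp
  then have C: "0 \<le> C" "C \<le> 1" using Ccoef_bounds[of \<alpha> t] assms(1-3) unfolding C_def by linarith+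
  have Cx: "0 \<le> C^2 * x^2" "C^2 * x^2 \<le> 1" using x C by (auto intro: mult_le_one power_le_one)
  have "0 \<le> 2*\<alpha>*C^2*x^2" "2*\<alpha>*C^2*x^2 \<le> 2*\<alpha>" "0 \<le> C^2*x^2*S" "C^2*x^2*S \<le> \<alpha> + 1"
    using Cx S assms(1) mult_mono[of "C^2*x^2" 1 S "\<alpha> + 1"] by (auto simp: mult.assoc)
  moreover have "0 \<le> \<alpha> * cos (2*t)" "\<alpha> * cos (2*t) \<le> \<alpha>"
    using assms cos_gt_zero[of "2*t"] by auto
  ultimately have "\<bar>N\<bar> \<le> 3*\<alpha> + 1" unfolding N_def abs_le_iff by linarith
  have D: "q * (\<alpha>^2 - 1) \<le> q * S * (\<alpha> + S)" "0 < q * (\<alpha>^2 - 1)"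
    using Lint_denominator_bounds(1)[OF assms] assms(1,4)
    by (simp_all add: q_def S_def abs_square_less_1 one_less_power)
  have "\<bar>Lint_integrand \<alpha> t x\<bar> = \<bar>N\<bar> / (q * S * (\<alpha> + S))"
    using D by (simp add: Lint_integrand_def N_def C_def S_def q_def abs_divide)
  also have "\<dots> \<le> (3*\<alpha> + 1) / (q * (\<alpha>^2 - 1))"
    using D \<open>\<bar>N\<bar> \<le> _\<close> by (intro frac_le) auto
  finally show ?thesis by (simp add: q_def divide_inverse ac_simps)
qed

lemma inverse_sqrt_one_minus_square_integrable:
  "(\<lambda>x::real. inverse (sqrt (1 - x^2))) integrable_on {-1<..<1}"
proof -
  have "((\<lambda>x::real. inverse (sqrt (1 - x^2))) has_integral (arcsin 1 - arcsin (-1))) {-1..1}"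
  proof (rule fundamental_theorem_of_calculus_interior)
    show "(arcsin has_vector_derivative inverse (sqrt (1 - x^2))) (at x)" if "x \<in> {-1<..<1}" for x
      using DERIV_arcsin[of x] that by (simp add: has_real_derivative_iff_has_vector_derivative)
  qed (simp_all add: continuous_on_arcsin')
  then show ?thesis using integrable_on_open_interval_real by blast
qed

lemma Lint_neg:
  assumes "\<alpha> > 1" "0 < t" "t < pi/4" and dominant: "(3*\<alpha> + 1) / (4*\<alpha>^2) < \<alpha> * cos (2*t)"
  shows "Lint \<alpha> t < 0"
proof -
  define f where "f = Lint_integrand \<alpha> t"
  define \<eta> where "\<eta> = ((3*\<alpha> + 1) / (4*\<alpha>^2) - \<alpha> * cos (2*t)) / ((\<alpha> + 1) * (2*\<alpha> + 1))"
  have "\<eta> < 0" using dominant assms(1) by (simp add: \<eta>_def divide_neg_pos)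
  have f_le: "f x \<le> \<eta>" if "x \<in> {-1<..<1}" for x
    unfolding f_def \<eta>_def
    by (rule Lint_integrand_le) (use that assms in \<open>auto simp: abs_less_iff\<close>)
  have measurable: "f \<in> borel_measurable (lebesgue_on {-1<..<1})"
    unfolding f_def Lint_integrand_def Ppoly_def
    by (rule borel_measurable_divide)
       (intro continuous_imp_measurable_on_sets_lebesgue continuous_intros; simp)+
  have dominating: "(\<lambda>x. (3*\<alpha> + 1) / (\<alpha>^2 - 1) * inverse (sqrt (1 - x^2))) integrable_on {-1<..<1::real}"
    using inverse_sqrt_one_minus_square_integrable by (rule integrable_on_mult_right)
  have bounded: "\<bar>f x\<bar> \<le> (3*\<alpha> + 1) / (\<alpha>^2 - 1) * inverse (sqrt (1 - x^2))" if "x \<in> {-1<..<1}" for x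
    unfolding f_def by (rule Lint_integrand_abs_le) (use that assms in \<open>auto simp: abs_less_iff\<close>)
  have "f integrable_on {-1<..<1}"
    by (rule measurable_bounded_by_integrable_imp_integrable_real[OF measurable dominating bounded]) simp_all
  then have "integral {-1<..<1} f \<le> integral {-1<..<1} (\<lambda>x::real. \<eta>)"
    using f_le by (intro integral_le) (auto simp: integrable_on_open_interval_real)
  also have "\<dots> = 2 * \<eta>"
    using integral_open_interval[of "-1" 1 "\<lambda>x::real. \<eta>"] by simp
  finally show ?thesis
    using \<open>\<eta> < 0\<close> integral_open_interval[of "-1" 1 f] by (simp add: Lint_eq_integral f_def)
qed

lemma Lint_zero_imp_cos_le:
  assumes "\<alpha> > 1" "0 < t" "t < pi/4" "Lint \<alpha> t = 0"
  shows "cos (2*t) \<le> 1 / \<alpha>^2"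
proof (rule ccontr)
  assume "\<not> cos (2*t) \<le> 1 / \<alpha>^2"
  then have "\<alpha> * (1 / \<alpha>^2) < \<alpha> * cos (2*t)" using assms(1) by (intro mult_strict_left_mono) auto
  moreover have "(3*\<alpha> + 1) / (4*\<alpha>^2) < \<alpha> * (1 / \<alpha>^2)"
    using assms(1) by (simp add: field_simps power2_eq_square)
  ultimately have "Lint \<alpha> t < 0" using Lint_neg assms(1-3) by (meson less_trans)
  with assms(4) show False by simp
qed

section \<open>Estimates along one profile curve\<close>

locale profile_curve =
  fixes \<alpha> t :: real and ph dph be G :: "real \<Rightarrow> real"
  assumes alpha_gt_1: "\<alpha> > 1"
    and t_pos: "0 < t" and t_less: "t < pi/4"
    and cos_le: "cos (2*t) \<le> 1 / \<alpha>^2"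
    and ph_deriv: "\<And>u. (ph has_real_derivative dph u) (at u)"
    and ph_ode: "\<And>u. (dph u)^2 = Ppoly \<alpha> t (cos (ph u))"
    and ph_0: "ph 0 = 0" and dph_0: "dph 0 \<le> 0"
    and be_deriv: "\<And>u. (be has_real_derivative Ccoef \<alpha> t * (cos (ph u))^2) (at u)"
    and be_0: "be 0 = 0"
    and G_deriv: "\<And>u. (G has_real_derivative Gder \<alpha> t (ph u) (dph u)) (at u)"
    and G_0: "G 0 = 0"
begin

lemma Ppoly_pos: "0 < Ppoly \<alpha> t (cos (ph u))"
  using sqrt_Ppoly_close alpha_gt_1 t_pos t_less by simp

lemma dph_neg: "dph u < 0"
proof -
  have nonzero: "dph v \<noteq> 0" for v
    using ph_ode[of v] Ppoly_pos[of v] by auto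
  then have "dph 0 < 0" using dph_0 by (simp add: order_less_le)
  moreover have "0 < dph 0 * dph u"
    by (rule has_real_derivative_nonzero_same_sign[OF ph_deriv nonzero])
  ultimately show ?thesis by (simp add: zero_less_mult_iff)
qed

lemma dph_close: "\<bar>dph u + \<alpha>\<bar> \<le> 1 / \<alpha>"
proof -
  have "sqrt (Ppoly \<alpha> t (cos (ph u))) = \<bar>dph u\<bar>"
    using ph_ode[of u] by (metis real_sqrt_abs)
  then have "dph u + \<alpha> = - (sqrt (Ppoly \<alpha> t (cos (ph u))) - \<alpha>)"
    using dph_neg[of u] by simp
  then show ?thesis
    using sqrt_Ppoly_close(2) alpha_gt_1 t_pos t_less by (simp only: abs_minus_cancel) simp
qed

lemma ph_close: "\<bar>ph u + \<alpha> * u\<bar> \<le> \<bar>u\<bar> / \<alpha>"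
proof -
  have "norm ((ph u + \<alpha> * u) - (ph 0 + \<alpha> * 0)) \<le> 1 / \<alpha> * norm (u - 0)"
  proof (rule field_differentiable_bound[where f = "\<lambda>u. ph u + \<alpha> * u" and S = UNIV])
    show "((\<lambda>u. ph u + \<alpha> * u) has_field_derivative dph z + \<alpha>) (at z within UNIV)" for z
      by (auto intro!: derivative_eq_intros ph_deriv)
  qed (use dph_close in auto)
  then show ?thesis by (simp add: ph_0)
qed

lemma Ccoef_close: "\<bar>\<alpha> * Ccoef \<alpha> t - 1/2\<bar> \<le> 1 / \<alpha>"
proof -
  define s where "s = sin (2*t)"
  have "0 < s" "s \<le> 1" using t_pos t_less by (auto simp: s_def intro: sin_gt_zero)
  have "0 \<le> cos (2*t)" using t_pos t_less by (intro cos_ge_zero) auto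
  then have "cos (2*t)^2 \<le> (1 / \<alpha>^2)^2" using cos_le by (intro power_mono)
  also have "\<dots> \<le> 1 / \<alpha>"
    using alpha_gt_1 one_le_power[of \<alpha> 3] by (simp add: field_simps eval_nat_numeral)
  \<comment> \<open>\<open>1 - s \<le> 1 - s\<^sup>2 = cos\<^sup>2 2t\<close>\<close>
  finally have "1 - s \<le> 1 / \<alpha>"
    using \<open>0 < s\<close> \<open>s \<le> 1\<close> sin_squared_eq[of "2*t"] mult_left_le_one_le[of s s]
    by (simp add: s_def power2_eq_square)
  moreover have "\<alpha> * Ccoef \<alpha> t = s / 2" using alpha_gt_1 by (simp add: Ccoef_def s_def)
  moreover have "0 < 1 / \<alpha>" using alpha_gt_1 by simp
  ultimately show ?thesis using \<open>s \<le> 1\<close> by (simp add: abs_le_iff)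
qed

lemma be_bound: "\<bar>be u\<bar> \<le> \<bar>u\<bar> / \<alpha>"
proof -
  have "norm (be u - be 0) \<le> 1 / \<alpha> * norm (u - 0)"
  proof (rule field_differentiable_bound[where S = UNIV])
    show "(be has_field_derivative Ccoef \<alpha> t * (cos (ph z))^2) (at z within UNIV)" for z
      using be_deriv by simp
    have C: "0 < Ccoef \<alpha> t" "Ccoef \<alpha> t \<le> 1 / \<alpha>"
      using Ccoef_bounds[of \<alpha> t] alpha_gt_1 t_pos t_less by simp_all
    show "norm (Ccoef \<alpha> t * (cos (ph z))^2) \<le> 1 / \<alpha>" for z
    proof -
      have "Ccoef \<alpha> t * (cos (ph z))^2 \<le> Ccoef \<alpha> t"
        using C by (intro mult_left_le) (auto simp: abs_square_le_1)
      then show ?thesis using C by (simp add: abs_mult, linarith)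
    qed
  qed auto
  then show ?thesis by (simp add: be_0)
qed

lemma Gder_bound: "\<bar>Gder \<alpha> t (ph u) (dph u)\<bar> \<le> 1 / \<alpha>^3"
proof -
  define C where "C = Ccoef \<alpha> t"
  have "C^2 \<le> (1 / (2*\<alpha>))^2"
    using Ccoef_bounds[of \<alpha> t] alpha_gt_1 t_pos t_less by (intro power_mono) (auto simp: C_def)
  also have "\<dots> \<le> 1 / \<alpha>^2" using alpha_gt_1 by (simp add: power_divide field_simps)
  finally have "C^2 * (cos (ph u))^2 \<le> 1 / \<alpha>^2"
    using mult_left_le[of "(cos (ph u))^2" "C^2"] by (simp add: abs_square_le_1)
  moreover have "0 \<le> C^2 * (cos (ph u))^2" by simp
  moreover have "0 \<le> cos (2*t)" using t_pos t_less by (intro cos_ge_zero) auto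
  ultimately have num: "\<bar>C^2 * (cos (ph u))^2 - cos (2*t)\<bar> \<le> 1 / \<alpha>^2"
    using cos_le unfolding abs_le_iff by linarith
  have den: "\<alpha> < \<alpha> - dph u" using dph_neg[of u] by simp
  have "\<bar>Gder \<alpha> t (ph u) (dph u)\<bar> = \<bar>C^2 * (cos (ph u))^2 - cos (2*t)\<bar> / (\<alpha> - dph u)"
    using den alpha_gt_1 by (simp add: Gder_def C_def abs_divide)
  also have "\<dots> \<le> (1 / \<alpha>^2) / \<alpha>"
    using num den alpha_gt_1 by (intro frac_le) auto
  finally show ?thesis by (simp add: power_def)
qed

lemma G_bound: "\<bar>G u\<bar> \<le> \<bar>u\<bar> / \<alpha>^3"
proof -
  have "norm (G u - G 0) \<le> 1 / \<alpha>^3 * norm (u - 0)"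
    by (rule field_differentiable_bound[where S = UNIV]) (use G_deriv Gder_bound in auto)
  then show ?thesis by (simp add: G_0)
qed

end

section \<open>Asymptotics as \<open>\<alpha> \<rightarrow> \<infinity>\<close>\<close>

lemma Xmap_rescaled_components:
  fixes \<alpha> t u v :: real and ph dph be G :: "real \<Rightarrow> real"
  assumes "\<alpha> \<noteq> 0"
  defines "X \<equiv> Xmap \<alpha> t ph dph be G u v" and "A \<equiv> \<alpha> * v + be u"
    and "C \<equiv> \<alpha> * Ccoef \<alpha> t" and "g \<equiv> \<alpha> * Gder \<alpha> t (ph u) (dph u)"
  shows "fst X = g * cos (ph u) * (sinh A / \<alpha>^2) - C * sin (ph u) * (cosh A / \<alpha>^2)"
    and "fst (snd X) = C * (v / \<alpha>) - G u"
    and "snd (snd X) + fst X * fst (snd X) / 2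
         = C * (g * (1 / \<alpha>^2) - 1) * cos (ph u) * (cosh A / \<alpha>^2)
           - (C^2 * (1 / \<alpha>^2) + g) * sin (ph u) * (sinh A / \<alpha>^2)"
  using assms(1) unfolding X_def A_def C_def g_def Xmap_def Let_def
  by (simp_all add: field_simps power2_eq_square)

locale profile_family =
  fixes \<theta> :: "real \<Rightarrow> real" and ph dph be G :: "real \<Rightarrow> real \<Rightarrow> real"
  assumes curve: "\<And>\<alpha>. \<alpha> > 1 \<Longrightarrow> profile_curve \<alpha> (\<theta> \<alpha>) (ph \<alpha>) (dph \<alpha>) (be \<alpha>) (G \<alpha>)"
begin

lemma alpha_Ccoef_tendsto: "((\<lambda>\<alpha>. \<alpha> * Ccoef \<alpha> (\<theta> \<alpha>)) \<longlongrightarrow> 1/2) at_top"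
  by (rule tendsto_at_top_of_dist_bound[where g = "\<lambda>\<alpha>. 1 / \<alpha>"])
     (use profile_curve.Ccoef_close[OF curve] in auto, real_asymp)

lemma ph_rescaled_tendsto: "((\<lambda>\<alpha>. ph \<alpha> (w / \<alpha>)) \<longlongrightarrow> - w) at_top"
proof (rule tendsto_at_top_of_dist_bound[where g = "\<lambda>\<alpha>. \<bar>w\<bar> / \<alpha>^2"])
  show "\<bar>ph \<alpha> (w / \<alpha>) - - w\<bar> \<le> \<bar>w\<bar> / \<alpha>^2" if "\<alpha> > 1" for \<alpha>
    using profile_curve.ph_close[OF curve[OF that], of "w / \<alpha>"] that
    by (simp add: abs_divide power2_eq_square)
qed real_asymp

lemma be_rescaled_tendsto: "((\<lambda>\<alpha>. be \<alpha> (w / \<alpha>)) \<longlongrightarrow> 0) at_top"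
proof (rule tendsto_at_top_of_dist_bound[where g = "\<lambda>\<alpha>. \<bar>w\<bar> / \<alpha>^2"])
  show "\<bar>be \<alpha> (w / \<alpha>) - 0\<bar> \<le> \<bar>w\<bar> / \<alpha>^2" if "\<alpha> > 1" for \<alpha>
    using profile_curve.be_bound[OF curve[OF that], of "w / \<alpha>"] that
    by (simp add: abs_divide power2_eq_square)
qed real_asymp

lemma G_rescaled_tendsto: "((\<lambda>\<alpha>. G \<alpha> (w / \<alpha>)) \<longlongrightarrow> 0) at_top"
proof (rule tendsto_at_top_of_dist_bound[where g = "\<lambda>\<alpha>. \<bar>w\<bar> / \<alpha>^4"])
  show "\<bar>G \<alpha> (w / \<alpha>) - 0\<bar> \<le> \<bar>w\<bar> / \<alpha>^4" if "\<alpha> > 1" for \<alpha>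
    using profile_curve.G_bound[OF curve[OF that], of "w / \<alpha>"] that
    by (simp add: abs_divide eval_nat_numeral)
qed real_asymp

lemma alpha_Gder_tendsto:
  "((\<lambda>\<alpha>. \<alpha> * Gder \<alpha> (\<theta> \<alpha>) (ph \<alpha> (u \<alpha>)) (dph \<alpha> (u \<alpha>))) \<longlongrightarrow> 0) at_top"
proof (rule tendsto_at_top_of_dist_bound[where g = "\<lambda>\<alpha>. 1 / \<alpha>^2"])
  show "\<bar>\<alpha> * Gder \<alpha> (\<theta> \<alpha>) (ph \<alpha> (u \<alpha>)) (dph \<alpha> (u \<alpha>)) - 0\<bar> \<le> 1 / \<alpha>^2"
    if "\<alpha> > 1" for \<alpha>
    using profile_curve.Gder_bound[OF curve[OF that], of "u \<alpha>"] that
    by (simp add: abs_mult field_simps eval_nat_numeral)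
qed real_asymp

lemma hyperbolic_rescaled_tendsto:
  fixes w z :: real
  defines "A \<equiv> \<lambda>\<alpha>. \<alpha> * ((4 * ln \<alpha> + z) / (2 * \<alpha>)) + be \<alpha> (w / \<alpha>)"
  shows "((\<lambda>\<alpha>. sinh (A \<alpha>) / \<alpha>^2) \<longlongrightarrow> exp (z / 2) / 2) at_top"
    and "((\<lambda>\<alpha>. cosh (A \<alpha>) / \<alpha>^2) \<longlongrightarrow> exp (z / 2) / 2) at_top"
proof -
  have A_eq: "\<forall>\<^sub>F \<alpha> in at_top. A \<alpha> = 2 * ln \<alpha> + (z / 2 + be \<alpha> (w / \<alpha>))"
    using eventually_gt_at_top[of 0] by eventually_elim (simp add: A_def field_simps)
  have "((\<lambda>\<alpha>. z / 2 + be \<alpha> (w / \<alpha>)) \<longlongrightarrow> z / 2) at_top"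
    using tendsto_add[OF tendsto_const be_rescaled_tendsto, of "z / 2"] by simp
  note hyperbolic = sinh_cosh_log_square_tendsto[OF this]
  show "((\<lambda>\<alpha>. sinh (A \<alpha>) / \<alpha>^2) \<longlongrightarrow> exp (z / 2) / 2) at_top"
    using hyperbolic(1) by (rule Lim_transform_eventually) (use A_eq in \<open>auto elim: eventually_mono\<close>)
  show "((\<lambda>\<alpha>. cosh (A \<alpha>) / \<alpha>^2) \<longlongrightarrow> exp (z / 2) / 2) at_top"
    using hyperbolic(2) by (rule Lim_transform_eventually) (use A_eq in \<open>auto elim: eventually_mono\<close>)
qed

lemma Xmap_rescaled_tendsto:
  fixes w z :: real
  defines "X \<equiv> \<lambda>\<alpha>. Xmap \<alpha> (\<theta> \<alpha>) (ph \<alpha>) (dph \<alpha>) (be \<alpha>) (G \<alpha>) (w / \<alpha>) ((4 * ln \<alpha> + z) / (2 * \<alpha>))"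
  shows "((\<lambda>\<alpha>. fst (X \<alpha>)) \<longlongrightarrow> sin w / 4 * exp (z / 2)) at_top"
    and "((\<lambda>\<alpha>. fst (snd (X \<alpha>))) \<longlongrightarrow> 0) at_top"
    and "((\<lambda>\<alpha>. snd (snd (X \<alpha>)) + fst (X \<alpha>) * fst (snd (X \<alpha>)) / 2) \<longlongrightarrow> - cos w / 4 * exp (z / 2)) at_top"
proof -
  define A where "A \<alpha> = \<alpha> * ((4 * ln \<alpha> + z) / (2 * \<alpha>)) + be \<alpha> (w / \<alpha>)" for \<alpha>
  define C where "C \<alpha> = \<alpha> * Ccoef \<alpha> (\<theta> \<alpha>)" for \<alpha>
  define g where "g \<alpha> = \<alpha> * Gder \<alpha> (\<theta> \<alpha>) (ph \<alpha> (w / \<alpha>)) (dph \<alpha> (w / \<alpha>))" for \<alpha>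
  note sinh = hyperbolic_rescaled_tendsto(1)[of z w, folded A_def]
    and cosh = hyperbolic_rescaled_tendsto(2)[of z w, folded A_def]
  have C: "(C \<longlongrightarrow> 1/2) at_top" and g: "(g \<longlongrightarrow> 0) at_top"
    and ph: "((\<lambda>\<alpha>. ph \<alpha> (w / \<alpha>)) \<longlongrightarrow> - w) at_top"
    unfolding C_def g_def by (fact alpha_Ccoef_tendsto alpha_Gder_tendsto ph_rescaled_tendsto)+
  have inv: "((\<lambda>\<alpha>::real. 1 / \<alpha>^2) \<longlongrightarrow> 0) at_top" by real_asymp
  have log: "((\<lambda>\<alpha>. (4 * ln \<alpha> + z) / (2 * \<alpha>) / \<alpha>) \<longlongrightarrow> 0) at_top" by real_asymp
  have components: "\<forall>\<^sub>F \<alpha> in at_top.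
      fst (X \<alpha>) = g \<alpha> * cos (ph \<alpha> (w / \<alpha>)) * (sinh (A \<alpha>) / \<alpha>^2)
                   - C \<alpha> * sin (ph \<alpha> (w / \<alpha>)) * (cosh (A \<alpha>) / \<alpha>^2)
    \<and> fst (snd (X \<alpha>)) = C \<alpha> * ((4 * ln \<alpha> + z) / (2 * \<alpha>) / \<alpha>) - G \<alpha> (w / \<alpha>)
    \<and> snd (snd (X \<alpha>)) + fst (X \<alpha>) * fst (snd (X \<alpha>)) / 2
       = C \<alpha> * (g \<alpha> * (1 / \<alpha>^2) - 1) * cos (ph \<alpha> (w / \<alpha>)) * (cosh (A \<alpha>) / \<alpha>^2)
         - ((C \<alpha>)^2 * (1 / \<alpha>^2) + g \<alpha>) * sin (ph \<alpha> (w / \<alpha>)) * (sinh (A \<alpha>) / \<alpha>^2)"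
    using eventually_gt_at_top[of 0] unfolding X_def A_def C_def g_def
    by eventually_elim (intro conjI Xmap_rescaled_components; simp)
  have "((\<lambda>\<alpha>. g \<alpha> * cos (ph \<alpha> (w / \<alpha>)) * (sinh (A \<alpha>) / \<alpha>^2)
                   - C \<alpha> * sin (ph \<alpha> (w / \<alpha>)) * (cosh (A \<alpha>) / \<alpha>^2))
      \<longlongrightarrow> 0 * cos (- w) * (exp (z / 2) / 2) - 1/2 * sin (- w) * (exp (z / 2) / 2)) at_top"
    by (intro tendsto_intros g C ph sinh cosh)
  then show "((\<lambda>\<alpha>. fst (X \<alpha>)) \<longlongrightarrow> sin w / 4 * exp (z / 2)) at_top"
    by (rule Lim_transform_eventually[THEN tendsto_eq_rhs])
       (use components in \<open>auto elim: eventually_mono\<close>)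
  have "((\<lambda>\<alpha>. C \<alpha> * ((4 * ln \<alpha> + z) / (2 * \<alpha>) / \<alpha>) - G \<alpha> (w / \<alpha>)) \<longlongrightarrow> 1/2 * 0 - 0) at_top"
    by (intro tendsto_intros C log G_rescaled_tendsto)
  then show "((\<lambda>\<alpha>. fst (snd (X \<alpha>))) \<longlongrightarrow> 0) at_top"
    by (rule Lim_transform_eventually[THEN tendsto_eq_rhs])
       (use components in \<open>auto elim: eventually_mono\<close>)
  have "((\<lambda>\<alpha>. C \<alpha> * (g \<alpha> * (1 / \<alpha>^2) - 1) * cos (ph \<alpha> (w / \<alpha>)) * (cosh (A \<alpha>) / \<alpha>^2)
         - ((C \<alpha>)^2 * (1 / \<alpha>^2) + g \<alpha>) * sin (ph \<alpha> (w / \<alpha>)) * (sinh (A \<alpha>) / \<alpha>^2))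
      \<longlongrightarrow> 1/2 * (0 * 0 - 1) * cos (- w) * (exp (z / 2) / 2)
         - ((1/2)^2 * 0 + 0) * sin (- w) * (exp (z / 2) / 2)) at_top"
    by (intro tendsto_intros g C ph sinh cosh inv)
  then show "((\<lambda>\<alpha>. snd (snd (X \<alpha>)) + fst (X \<alpha>) * fst (snd (X \<alpha>)) / 2)
      \<longlongrightarrow> - cos w / 4 * exp (z / 2)) at_top"
    by (rule Lim_transform_eventually[THEN tendsto_eq_rhs])
       (use components in \<open>auto elim: eventually_mono\<close>)
qed

end

theorem proposition6p1:
  fixes \<theta> :: "real \<Rightarrow> real"
    and ph dph be G :: "real \<Rightarrow> real \<Rightarrow> real"
    and uh vh :: real
  assumes theta: "\<And>\<alpha>. \<alpha> > 0 \<Longrightarrow> 0 < \<theta> \<alpha> \<and> \<theta> \<alpha> < theta_plus \<alpha> \<and> \<theta> \<alpha> < pi / 4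
                         \<and> Lint \<alpha> (\<theta> \<alpha>) = 0"
    and theta_unique: "\<And>\<alpha> t. \<alpha> > 0 \<Longrightarrow> 0 < t \<Longrightarrow> t < theta_plus \<alpha> \<Longrightarrow> t < pi / 4
                         \<Longrightarrow> Lint \<alpha> t = 0 \<Longrightarrow> t = \<theta> \<alpha>"
    and phi_deriv: "\<And>\<alpha> u. \<alpha> > 0 \<Longrightarrow> (ph \<alpha> has_real_derivative dph \<alpha> u) (at u)"
    and phi_ode: "\<And>\<alpha> u. \<alpha> > 0 \<Longrightarrow> (dph \<alpha> u)^2 = Ppoly \<alpha> (\<theta> \<alpha>) (cos (ph \<alpha> u))"
    and phi_init: "\<And>\<alpha>. \<alpha> > 0 \<Longrightarrow> ph \<alpha> 0 = 0 \<and> dph \<alpha> 0 \<le> 0"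
    and beta_deriv: "\<And>\<alpha> u. \<alpha> > 0 \<Longrightarrow>
        (be \<alpha> has_real_derivative Ccoef \<alpha> (\<theta> \<alpha>) * (cos (ph \<alpha> u))^2) (at u)"
    and beta_init: "\<And>\<alpha>. \<alpha> > 0 \<Longrightarrow> be \<alpha> 0 = 0"
    and G_deriv: "\<And>\<alpha> u. \<alpha> > 0 \<Longrightarrow>
        (G \<alpha> has_real_derivative Gder \<alpha> (\<theta> \<alpha>) (ph \<alpha> u) (dph \<alpha> u)) (at u)"
    and G_init: "\<And>\<alpha>. \<alpha> > 0 \<Longrightarrow> G \<alpha> 0 = 0"
  defines "y \<equiv> \<lambda>\<alpha>. Xmap \<alpha> (\<theta> \<alpha>) (ph \<alpha>) (dph \<alpha>) (be \<alpha>) (G \<alpha>)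
                   (uh / \<alpha>) ((4 * ln \<alpha> + vh) / (2 * \<alpha>))"
  shows "((\<lambda>\<alpha>. fst (y \<alpha>)) \<longlongrightarrow> sin uh / 4 * exp (vh / 2)) at_top
       \<and> ((\<lambda>\<alpha>. fst (snd (y \<alpha>))) \<longlongrightarrow> 0) at_top
       \<and> ((\<lambda>\<alpha>. snd (snd (y \<alpha>)) + fst (y \<alpha>) * fst (snd (y \<alpha>)) / 2)
           \<longlongrightarrow> - cos uh / 4 * exp (vh / 2)) at_top"
proof -
  have "profile_family \<theta> ph dph be G"
  proof (rule profile_family.intro)
    fix \<alpha> :: real
    assume "\<alpha> > 1"
    with theta[of \<alpha>] have "0 < \<theta> \<alpha>" "\<theta> \<alpha> < pi / 4" "Lint \<alpha> (\<theta> \<alpha>) = 0" by auto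
    with \<open>\<alpha> > 1\<close> show "profile_curve \<alpha> (\<theta> \<alpha>) (ph \<alpha>) (dph \<alpha>) (be \<alpha>) (G \<alpha>)"
      by unfold_locales
         (use Lint_zero_imp_cos_le phi_deriv phi_ode phi_init beta_deriv beta_init G_deriv G_init
          in simp_all)
  qed
  from profile_family.Xmap_rescaled_tendsto[OF this] show ?thesis unfolding y_def by blast
qed

end
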